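(* Let $X$ be a locally finite poset with unique minimal element $0$ which is a complete lattice equipped with a conjugation $x\mapsto\overline{x}$, let $L^+$ be a totally ordered set with bottom $\mathbb{O}$ and top $\mathbb{1}$ equipped with a conjugation $a\mapsto\overline{a}$, let $g:X\to L^+$ be isotone and let $\overline{g}(x):=\overline{g(\overline{x})}$. Then: (i) $\mathscr{C}(\overline{g})=\{\overline{C}: C\in\mathscr{C}(g)\}$, where for $C=\{c_1<\cdots<c_l\}$ one sets $\overline{C}=\{\overline{c_l}<\cdots<\overline{c_1}\}$, and the value of $\overline{C}$ is $\overline{g}(\overline{C})=\overline{g(C)}$; (ii) for every $x\in X$: $m^{\overline{g}}(x)=\mathbb{O}$ if $x$ lies in some $\overline{C}\in\mathscr{C}(\overline{g})$ and $x\ne\overline{C}_*$; $m^{\overline{g}}(x)=\overline{m^g(C_* )}$ if $x=\overline{C}_*$ for some $\overline{C}\in\mathscr{C}(\overline{g})$ (with $C$ the corresponding $g$-chain); and $m^{\overline{g}}(x)=\overline{m^g(\overline{x})}$ otherwise.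
   Context: A conjugation on a lattice is a bijective order-reversing map $a\mapsto\overline{a}$ with $\overline{\overline{a}}=a$. Locally finite: every interval is finite; $y\prec x$ means $x$ covers $y$. For isotone $h:X\to L^+$, its canonical Möbius transform is $m^h(x)=h(x)$ if $h(x)>h(y)$ for all $y\prec x$, and $m^h(x)=\mathbb{O}$ otherwise. An $h$-chain is a chain $C\subseteq X$ with at least two elements on which $h$ is constant and which is maximal for inclusion among chains on which $h$ is constant; its value $h(C)$ is the common value, $C_*$ its minimal element; $\mathscr{C}(h)$ is the set of $h$-chains. Under the present assumptions every $h$-chain is finite. *)

theory Defs
  imports Main
begin

definition is_conjugation :: "('a::order \<Rightarrow> 'a) \<Rightarrow> bool" where
  "is_conjugation c \<longleftrightarrow> bij c \<and> (\<forall>a b. a \<le> b \<longrightarrow> c b \<le> c a) \<and> (\<forall>a. c (c a) = a)"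

definition locally_finite :: "'a::order itself \<Rightarrow> bool" where
  "locally_finite _ \<longleftrightarrow> (\<forall>a b::'a. finite {a..b})"

definition covers :: "'a::order \<Rightarrow> 'a \<Rightarrow> bool" where
  "covers y x \<longleftrightarrow> y < x \<and> \<not> (\<exists>z. y < z \<and> z < x)"

definition mobius :: "('a::order \<Rightarrow> 'b::{linorder,order_bot}) \<Rightarrow> 'a \<Rightarrow> 'b" where
  "mobius h x = (if (\<forall>y. covers y x \<longrightarrow> h y < h x) then h x else bot)"

definition is_h_chain :: "('a::order \<Rightarrow> 'b) \<Rightarrow> 'a set \<Rightarrow> bool" where
  "is_h_chain h C \<longleftrightarrow>
     Complete_Partial_Order.chain (\<le>) C \<and> (\<exists>a\<in>C. \<exists>b\<in>C. a \<noteq> b) \<and>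
     (\<forall>a\<in>C. \<forall>b\<in>C. h a = h b) \<and>
     (\<forall>D. C \<subseteq> D \<and> Complete_Partial_Order.chain (\<le>) D \<and> (\<forall>a\<in>D. \<forall>b\<in>D. h a = h b)
          \<longrightarrow> D = C)"

definition h_chains :: "('a::order \<Rightarrow> 'b) \<Rightarrow> 'a set set" where
  "h_chains h = {C. is_h_chain h C}"

definition chain_val :: "('a \<Rightarrow> 'b) \<Rightarrow> 'a set \<Rightarrow> 'b" where
  "chain_val h C = h (SOME c. c \<in> C)"

definition chain_min :: "'a::order set \<Rightarrow> 'a" where
  "chain_min C = (THE c. c \<in> C \<and> (\<forall>d\<in>C. c \<le> d))"

definition conj_fun :: "('a \<Rightarrow> 'a) \<Rightarrow> ('b \<Rightarrow> 'b) \<Rightarrow> ('a \<Rightarrow> 'b) \<Rightarrow> 'a \<Rightarrow> 'b" where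
  "conj_fun cX cL g = (\<lambda>x. cL (g (cX x)))"

end

theory Submission
  imports Defs
begin

(* Since the conjugation of X is an order-reversing involution, D \<mapsto> cX ` D is an
   inclusion-preserving bijection from the chains on which g is constant onto those on which
   the conjugate function is constant; so it maps g-chains onto conjugate-chains, and the
   injective conjugation of L transports their values.
   For the Moebius transform, call a cover y \<prec> x flat if h y = h x.  For isotone h on a
   finite poset, m^h(x) vanishes exactly when x has a flat cover, and x has one exactly when it
   lies in an h-chain without being its minimum: a flat cover of the minimum of an h-chain would
   extend that chain, whereas a flat cover {y, x} is itself a constant chain and hence lies in
   an h-chain.  A locally finite complete lattice is finite, so in each case of (ii) both sides
   are either the bottom element or the value of the function. *)

lemma conjugation_involution:
  "is_conjugation c \<Longrightarrow> c (c a) = a"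
  unfolding is_conjugation_def by blast

lemma conjugation_antimono:
  "is_conjugation c \<Longrightarrow> a \<le> b \<Longrightarrow> c b \<le> c a"
  unfolding is_conjugation_def by blast

lemma conjugation_le_iff:
  "is_conjugation c \<Longrightarrow> c a \<le> c b \<longleftrightarrow> b \<le> a"
  by (metis conjugation_antimono conjugation_involution)

lemma conjugation_eq_iff:
  "is_conjugation c \<Longrightarrow> c a = c b \<longleftrightarrow> a = b"
  by (metis conjugation_involution)

lemma conjugation_image_image:
  "is_conjugation c \<Longrightarrow> c ` c ` A = A"
  by (simp add: image_image conjugation_involution)

lemma conjugation_image_eq_iff:
  "is_conjugation c \<Longrightarrow> c ` A = c ` B \<longleftrightarrow> A = B"
  by (metis conjugation_image_image)

lemma conjugation_image_subset_iff:
  "is_conjugation c \<Longrightarrow> c ` A \<subseteq> c ` B \<longleftrightarrow> A \<subseteq> B"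
  by (metis conjugation_image_image image_mono)

lemma all_conjugation_image_iff:
  "is_conjugation c \<Longrightarrow> (\<forall>D. P D) \<longleftrightarrow> (\<forall>E. P (c ` E))"
  by (metis conjugation_image_image)

lemma chain_conjugation_image_iff:
  assumes "is_conjugation c"
  shows "Complete_Partial_Order.chain (\<le>) (c ` A) \<longleftrightarrow> Complete_Partial_Order.chain (\<le>) A"
  using assms by (auto simp: chain_def conjugation_le_iff)

lemma conj_fun_apply_conjugate:
  "is_conjugation cX \<Longrightarrow> conj_fun cX cL g (cX a) = cL (g a)"
  by (simp add: conj_fun_def conjugation_involution)

lemma mono_conj_fun:
  "is_conjugation cX \<Longrightarrow> is_conjugation cL \<Longrightarrow> mono g \<Longrightarrow> mono (conj_fun cX cL g)"
  unfolding conj_fun_def by (rule monoI) (metis conjugation_antimono monoD)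

definition constant_chain :: "('a::order \<Rightarrow> 'b) \<Rightarrow> 'a set \<Rightarrow> bool" where
  "constant_chain h D \<longleftrightarrow> Complete_Partial_Order.chain (\<le>) D \<and> (\<forall>a\<in>D. \<forall>b\<in>D. h a = h b)"

lemma is_h_chain_iff:
  "is_h_chain h C \<longleftrightarrow> constant_chain h C \<and> (\<exists>a\<in>C. \<exists>b\<in>C. a \<noteq> b)
     \<and> (\<forall>D. constant_chain h D \<and> C \<subseteq> D \<longrightarrow> D = C)"
  unfolding is_h_chain_def constant_chain_def by (simp add: conj_ac)

lemma constant_chain_insert_below:
  assumes "constant_chain h C" "c \<in> C" "h y = h c" "\<forall>d\<in>C. y \<le> d"
  shows "constant_chain h (insert y C)"
proof -
  have "h a = h c" if "a \<in> insert y C" for a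
    using assms(1-3) that unfolding constant_chain_def by blast
  moreover have "Complete_Partial_Order.chain (\<le>) (insert y C)"
  proof (rule chainI)
    fix a b assume "a \<in> insert y C" "b \<in> insert y C"
    then show "a \<le> b \<or> b \<le> a"
      using assms(1,4) chainD[of "(\<le>)" C a b] unfolding constant_chain_def by auto
  qed
  ultimately show ?thesis unfolding constant_chain_def by simp
qed

lemma constant_chain_cover:
  assumes "covers y x" "h y = h x"
  shows "constant_chain h {y, x}"
  using assms unfolding constant_chain_def chain_def covers_def by (simp add: less_imp_le)

lemma chain_min_eqI:
  assumes "c \<in> C" "\<forall>d\<in>C. c \<le> d"
  shows "chain_min C = c"
  unfolding chain_min_def using assms by (intro the_equality) (simp_all add: order.antisym)

lemma chain_val_eq:
  assumes "c \<in> C" "\<forall>a\<in>C. \<forall>b\<in>C. h a = h b"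
  shows "chain_val h C = h c"
  unfolding chain_val_def using assms by (metis someI)

lemma finite_chain_has_least:
  assumes "finite C" "C \<noteq> {}" "Complete_Partial_Order.chain (\<le>) C"
  obtains c where "c \<in> C" "\<forall>d\<in>C. c \<le> (d::'a::order)"
proof -
  obtain c where "c \<in> C" "\<forall>d\<in>C. d \<le> c \<longrightarrow> c = d"
    using finite_has_minimal[OF assms(1,2)] by blast
  with assms(3) show ?thesis using that by (metis chainD)
qed

lemma
  assumes "finite (UNIV :: 'a::order set)" "is_h_chain h (C::'a set)"
  shows h_chain_min_mem: "chain_min C \<in> C"
    and h_chain_min_le: "d \<in> C \<Longrightarrow> chain_min C \<le> d"
proof -
  have "C \<noteq> {}" "Complete_Partial_Order.chain (\<le>) C"
    using assms(2) unfolding is_h_chain_def by blast+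
  then obtain c where "c \<in> C" "\<forall>d\<in>C. c \<le> d"
    using finite_chain_has_least[OF finite_subset[OF subset_UNIV assms(1)]] by blast
  then show "chain_min C \<in> C" "d \<in> C \<Longrightarrow> chain_min C \<le> d"
    by (simp_all add: chain_min_eqI)
qed

lemma constant_chain_extends_to_h_chain:
  assumes fin: "finite (UNIV :: 'a::order set)" and D: "constant_chain h (D::'a set)"
    and two: "a \<in> D" "b \<in> D" "a \<noteq> b"
  obtains C where "is_h_chain h C" "D \<subseteq> C"
proof -
  define S where "S = {E. constant_chain h E \<and> D \<subseteq> E}"
  have "finite S"
    using finite_Pow_iff[THEN iffD2, OF fin] by (rule finite_subset[rotated]) simp
  moreover have "D \<in> S" unfolding S_def using D by blast
  ultimately obtain C where C: "C \<in> S" and maximal: "\<forall>E\<in>S. C \<subseteq> E \<longrightarrow> C = E"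
    using finite_has_maximal by blast
  have "is_h_chain h C" unfolding is_h_chain_iff
  proof (intro conjI allI impI)
    show "constant_chain h C" using C unfolding S_def by blast
    show "\<exists>a\<in>C. \<exists>b\<in>C. a \<noteq> b" using C two unfolding S_def by blast
    fix E assume E: "constant_chain h E \<and> C \<subseteq> E"
    with C have "E \<in> S" unfolding S_def by auto
    with E maximal show "E = C" by auto
  qed
  moreover have "D \<subseteq> C" using C unfolding S_def by blast
  ultimately show ?thesis by (rule that)
qed

lemma finite_UNIV_if_locally_finite:
  assumes "locally_finite TYPE('a::{order_bot,order_top})"
  shows "finite (UNIV :: 'a set)"
proof -
  have "finite {bot..top::'a}" using assms unfolding locally_finite_def by blast
  moreover have "{bot..top::'a} = UNIV" by (simp add: set_eq_iff)
  ultimately show ?thesis by simp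
qed

lemma exists_cover_above:
  assumes "finite {d..<x}" "(d::'a::order) < x"
  obtains y where "covers y x" "d \<le> y"
proof -
  obtain y where y: "y \<in> {d..<x}" "\<forall>z\<in>{d..<x}. y \<le> z \<longrightarrow> y = z"
    using finite_has_maximal2[OF assms(1)] assms(2) by fastforce
  have "\<not> (y < z \<and> z < x)" for z
  proof
    assume z: "y < z \<and> z < x"
    then have "z \<in> {d..<x}" using y(1) by (auto dest: order.trans[OF _ less_imp_le])
    with y(2) have "y \<le> z \<longrightarrow> y = z" by blast
    with z show False by auto
  qed
  then have "covers y x" using y(1) unfolding covers_def by auto
  moreover have "d \<le> y" using y(1) by simp
  ultimately show ?thesis by (rule that)
qed

lemma h_chain_nonmin_flat_cover:
  assumes fin: "finite (UNIV :: 'a::order set)" and "mono h" and H: "is_h_chain h (D::'a set)"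
    and x: "x \<in> D" "x \<noteq> chain_min D"
  obtains y where "covers y x" "h y = h x"
proof -
  let ?m = "chain_min D"
  have m: "?m \<in> D" "?m < x"
    using h_chain_min_mem[OF fin H] h_chain_min_le[OF fin H x(1)] x(2) by auto
  then obtain y where y: "covers y x" "?m \<le> y"
    using exists_cover_above[OF finite_subset[OF subset_UNIV fin]] by blast
  have "h ?m = h x" using H m x unfolding is_h_chain_def by blast
  moreover have "h ?m \<le> h y" "h y \<le> h x"
    using y monoD[OF \<open>mono h\<close>] unfolding covers_def by (simp_all add: less_imp_le)
  ultimately have "h y = h x" by (metis order.antisym)
  with y(1) show ?thesis by (rule that)
qed

lemma h_chain_min_no_flat_cover:
  assumes fin: "finite (UNIV :: 'a::order set)" and H: "is_h_chain h (C::'a set)"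
    and y: "covers y (chain_min C)"
  shows "h y \<noteq> h (chain_min C)"
proof
  assume flat: "h y = h (chain_min C)"
  have C: "constant_chain h C" and maximal: "\<And>D. constant_chain h D \<Longrightarrow> C \<subseteq> D \<Longrightarrow> D = C"
    using H unfolding is_h_chain_iff by blast+
  have below: "\<forall>d\<in>C. y < d"
    using y h_chain_min_le[OF fin H] unfolding covers_def by (auto intro: less_le_trans)
  then have "constant_chain h (insert y C)"
    using constant_chain_insert_below[OF C h_chain_min_mem[OF fin H] flat] by (simp add: less_imp_le)
  then have "insert y C = C" by (rule maximal) blast
  with below show False by auto
qed

lemma mobius_eq_bot_if_flat_cover:
  assumes "covers y x" "h y = h x"
  shows "mobius h x = bot"
proof -
  have "\<not> (\<forall>y. covers y x \<longrightarrow> h y < h x)" using assms by auto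
  then show ?thesis unfolding mobius_def by (simp only: if_False)
qed

lemma mobius_eq_if_no_flat_cover:
  assumes "mono h" "\<And>y. covers y x \<Longrightarrow> h y \<noteq> h x"
  shows "mobius h x = h x"
proof -
  have "h y < h x" if "covers y x" for y
  proof -
    have "h y \<le> h x" using that monoD[OF assms(1)] unfolding covers_def by (simp add: less_imp_le)
    with assms(2)[OF that] show ?thesis by (simp add: less_le)
  qed
  then show ?thesis unfolding mobius_def by simp
qed

lemma mobius_h_chain_nonmin:
  assumes "finite (UNIV :: 'a::order set)" "mono h" "is_h_chain h (D::'a set)"
    "x \<in> D" "x \<noteq> chain_min D"
  shows "mobius h x = bot"
  using h_chain_nonmin_flat_cover[OF assms] mobius_eq_bot_if_flat_cover by metis

lemma mobius_h_chain_min: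
  assumes "finite (UNIV :: 'a::order set)" "mono h" "is_h_chain h (C::'a set)"
  shows "mobius h (chain_min C) = h (chain_min C)"
  using mobius_eq_if_no_flat_cover[OF assms(2)] h_chain_min_no_flat_cover[OF assms(1,3)] by blast

lemma mobius_outside_h_chains:
  assumes fin: "finite (UNIV :: 'a::order set)" and "mono (h::'a \<Rightarrow> _)"
    and x: "\<forall>C\<in>h_chains h. x \<notin> C"
  shows "mobius h x = h x"
proof (rule mobius_eq_if_no_flat_cover[OF \<open>mono h\<close>])
  fix y assume y: "covers y x"
  show "h y \<noteq> h x"
  proof
    assume "h y = h x"
    with y have "constant_chain h {y, x}" by (rule constant_chain_cover)
    moreover have "y \<noteq> x" using y unfolding covers_def by auto
    ultimately obtain C where "is_h_chain h C" "{y, x} \<subseteq> C"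
      using constant_chain_extends_to_h_chain[OF fin] by blast
    with x show False unfolding h_chains_def by blast
  qed
qed

lemma constant_chain_conj_image_iff:
  assumes "is_conjugation cX" "is_conjugation cL"
  shows "constant_chain (conj_fun cX cL g) (cX ` D) \<longleftrightarrow> constant_chain g D"
  unfolding constant_chain_def using assms
  by (simp add: chain_conjugation_image_iff conj_fun_apply_conjugate conjugation_eq_iff)

lemma is_h_chain_conj_image_iff:
  assumes cX: "is_conjugation cX" and cL: "is_conjugation cL"
  shows "is_h_chain (conj_fun cX cL g) (cX ` C) \<longleftrightarrow> is_h_chain g C"
  unfolding is_h_chain_iff
    all_conjugation_image_iff[OF cX, where P = "\<lambda>D. _ D \<and> cX ` C \<subseteq> D \<longrightarrow> D = cX ` C"]
  by (simp add: constant_chain_conj_image_iff conjugation_image_subset_iff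
      conjugation_image_eq_iff conjugation_eq_iff cX cL)

lemma h_chains_conj_fun:
  assumes "is_conjugation cX" "is_conjugation cL"
  shows "h_chains (conj_fun cX cL g) = (\<lambda>C. cX ` C) ` h_chains g"
proof (rule set_eqI)
  fix D
  have "D \<in> h_chains (conj_fun cX cL g) \<longleftrightarrow> cX ` D \<in> h_chains g"
    using is_h_chain_conj_image_iff[OF assms, of g "cX ` D"]
    by (simp add: h_chains_def conjugation_image_image assms)
  then show "D \<in> h_chains (conj_fun cX cL g) \<longleftrightarrow> D \<in> (\<lambda>C. cX ` C) ` h_chains g"
    by (metis (no_types, lifting) assms(1) conjugation_image_image image_iff)
qed

lemma chain_val_conj_image:
  assumes cX: "is_conjugation cX" and cL: "is_conjugation cL" and H: "is_h_chain g C"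
  shows "chain_val (conj_fun cX cL g) (cX ` C) = cL (chain_val g C)"
proof -
  obtain c where c: "c \<in> C" using H unfolding is_h_chain_def by blast
  have "constant_chain g C" using H unfolding is_h_chain_iff by blast
  then have const: "\<forall>a\<in>C. \<forall>b\<in>C. g a = g b"
    and const': "\<forall>a\<in>cX ` C. \<forall>b\<in>cX ` C. conj_fun cX cL g a = conj_fun cX cL g b"
    using constant_chain_conj_image_iff[OF cX cL] unfolding constant_chain_def by blast+
  have "chain_val (conj_fun cX cL g) (cX ` C) = conj_fun cX cL g (cX c)"
    by (rule chain_val_eq[OF imageI[OF c] const'])
  also have "\<dots> = cL (chain_val g C)"
    unfolding conj_fun_apply_conjugate[OF cX] chain_val_eq[OF c const] ..
  finally show ?thesis .
qed

lemma mobius_conj_fun_h_chain_min: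
  assumes fin: "finite (UNIV :: 'a::order set)" and cX: "is_conjugation cX"
    and cL: "is_conjugation cL" and g: "mono g" and H: "is_h_chain g (C::'a set)"
  shows "mobius (conj_fun cX cL g) (chain_min (cX ` C)) = cL (mobius g (chain_min C))"
proof -
  let ?G = "conj_fun cX cL g" and ?m = "chain_min (cX ` C)"
  have H': "is_h_chain ?G (cX ` C)" using H by (simp add: is_h_chain_conj_image_iff cX cL)
  then have "cX ?m \<in> C" using h_chain_min_mem[OF fin] conjugation_involution[OF cX] by force
  then have "g (cX ?m) = g (chain_min C)"
    using H h_chain_min_mem[OF fin H] unfolding is_h_chain_def by blast
  moreover have "mobius ?G ?m = cL (g (cX ?m))"
    using mobius_h_chain_min[OF fin mono_conj_fun[OF cX cL g] H'] by (simp add: conj_fun_def)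
  ultimately show ?thesis using mobius_h_chain_min[OF fin g H] by simp
qed

lemma mobius_conj_fun_outside_h_chains:
  assumes fin: "finite (UNIV :: 'a::order set)" and cX: "is_conjugation cX"
    and cL: "is_conjugation cL" and g: "mono (g::'a \<Rightarrow> _)"
    and x: "\<forall>D\<in>h_chains (conj_fun cX cL g). x \<notin> D"
  shows "mobius (conj_fun cX cL g) x = cL (mobius g (cX x))"
proof -
  have "\<forall>C\<in>h_chains g. cX x \<notin> C"
  proof (intro ballI notI)
    fix C assume "C \<in> h_chains g" "cX x \<in> C"
    then have "x \<in> cX ` C" using conjugation_involution[OF cX] by (metis imageI)
    moreover have "cX ` C \<in> h_chains (conj_fun cX cL g)"
      using \<open>C \<in> h_chains g\<close> h_chains_conj_fun[OF cX cL] by blast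
    ultimately show False using x by blast
  qed
  then have "mobius g (cX x) = g (cX x)" by (rule mobius_outside_h_chains[OF fin g])
  moreover have "mobius (conj_fun cX cL g) x = conj_fun cX cL g x"
    by (rule mobius_outside_h_chains[OF fin mono_conj_fun[OF cX cL g] x])
  ultimately show ?thesis by (simp add: conj_fun_def)
qed

theorem proposition7:
  fixes cX :: "'a::complete_lattice \<Rightarrow> 'a"
    and cL :: "'b::{linorder,order_bot,order_top} \<Rightarrow> 'b"
    and g :: "'a \<Rightarrow> 'b"
  assumes "locally_finite TYPE('a)"
    and "is_conjugation cX"
    and "is_conjugation cL"
    and "mono g"
  shows "h_chains (conj_fun cX cL g) = (\<lambda>C. cX ` C) ` h_chains g
     \<and> (\<forall>C\<in>h_chains g. chain_val (conj_fun cX cL g) (cX ` C) = cL (chain_val g C))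
     \<and> (\<forall>x. (\<forall>D\<in>h_chains (conj_fun cX cL g). x \<in> D \<and> x \<noteq> chain_min D
                \<longrightarrow> mobius (conj_fun cX cL g) x = bot)
          \<and> (\<forall>C\<in>h_chains g. x = chain_min (cX ` C)
                \<longrightarrow> mobius (conj_fun cX cL g) x = cL (mobius g (chain_min C)))
          \<and> ((\<forall>D\<in>h_chains (conj_fun cX cL g). x \<notin> D)
                \<longrightarrow> mobius (conj_fun cX cL g) x = cL (mobius g (cX x))))"
proof -
  let ?G = "conj_fun cX cL g"
  have fin: "finite (UNIV :: 'a set)" by (rule finite_UNIV_if_locally_finite[OF assms(1)])
  show ?thesis
  proof (intro conjI allI ballI impI)
    show "h_chains ?G = (\<lambda>C. cX ` C) ` h_chains g" by (rule h_chains_conj_fun[OF assms(2,3)])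
  next
    fix C assume "C \<in> h_chains g"
    then show "chain_val ?G (cX ` C) = cL (chain_val g C)"
      unfolding h_chains_def by (simp add: chain_val_conj_image assms(2,3))
  next
    fix x D assume "D \<in> h_chains ?G" "x \<in> D \<and> x \<noteq> chain_min D"
    then show "mobius ?G x = bot"
      using mobius_h_chain_nonmin[OF fin mono_conj_fun[OF assms(2-4)], of D x]
      unfolding h_chains_def by simp
  next
    fix x C assume "C \<in> h_chains g" "x = chain_min (cX ` C)"
    then show "mobius ?G x = cL (mobius g (chain_min C))"
      unfolding h_chains_def by (simp add: mobius_conj_fun_h_chain_min[OF fin assms(2-4)])
  next
    fix x assume "\<forall>D\<in>h_chains ?G. x \<notin> D"
    then show "mobius ?G x = cL (mobius g (cX x))"
      by (rule mobius_conj_fun_outside_h_chains[OF fin assms(2-4)])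
  qed
qed

end
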